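(* For $n\ge 2$, $\mathscr{Z}^{\rm TAR}(K_n)\cong K_{1,n}$. Furthermore, $\overline{\operatorname{Z}}(K_n)=\operatorname{Z}(K_n)=n-1$ and $z_0(K_n)=\underline{z_0}(K_n)=n$.
   Context: Zero forcing on a graph $G$: starting with a set $S$ of blue vertices (others white), a blue vertex $v$ may change a white vertex $w$ to blue if $w$ is the only white neighbor of $v$. $S$ is a zero forcing set if repeated application colors all of $V(G)$ blue. $\operatorname{Z}(G)$ is the minimum size of a zero forcing set, $\overline{\operatorname{Z}}(G)$ the maximum size of a minimal (under inclusion) zero forcing set. $\mathscr{Z}^{\rm TAR}(G)$ has vertices the zero forcing sets of $G$, two adjacent iff their symmetric difference has size 1; $\mathscr{Z}^{\rm TAR}_k(G)$ is its subgraph induced by zero forcing sets of size at most $k$. $\underline{z_0}(G)$ is the least $k$ with $\mathscr{Z}^{\rm TAR}_k(G)$ connected; $z_0(G)$ is the least $k$ such that $\mathscr{Z}^{\rm TAR}_i(G)$ is connected for every $i=k,\dots,|V(G)|$. $K_{1,n}$ is the star with $n$ leaves. *)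

theory Defs
  imports Main
begin

text \<open>A (simple) graph is given by a vertex set V and a symmetric irreflexive
adjacency relation E.\<close>

text \<open>Set of vertices eventually coloured blue starting from S (least set closed
under the colour-change rule).\<close>
inductive_set zf_closure :: "'a set \<Rightarrow> ('a \<Rightarrow> 'a \<Rightarrow> bool) \<Rightarrow> 'a set \<Rightarrow> 'a set"
  for V E S where
  base: "x \<in> S \<Longrightarrow> x \<in> zf_closure V E S"
| force: "\<lbrakk> v \<in> zf_closure V E S; w \<in> V; E v w;
            \<forall>u\<in>V. E v u \<and> u \<noteq> w \<longrightarrow> u \<in> zf_closure V E S \<rbrakk>
          \<Longrightarrow> w \<in> zf_closure V E S"

definition zero_forcing_set :: "'a set \<Rightarrow> ('a \<Rightarrow> 'a \<Rightarrow> bool) \<Rightarrow> 'a set \<Rightarrow> bool" where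
  "zero_forcing_set V E S \<longleftrightarrow> S \<subseteq> V \<and> zf_closure V E S = V"

definition minimal_zero_forcing_set :: "'a set \<Rightarrow> ('a \<Rightarrow> 'a \<Rightarrow> bool) \<Rightarrow> 'a set \<Rightarrow> bool" where
  "minimal_zero_forcing_set V E S \<longleftrightarrow>
     zero_forcing_set V E S \<and> (\<forall>T. T \<subset> S \<longrightarrow> \<not> zero_forcing_set V E T)"

definition Z :: "'a set \<Rightarrow> ('a \<Rightarrow> 'a \<Rightarrow> bool) \<Rightarrow> nat" where
  "Z V E = Min {card S | S. zero_forcing_set V E S}"

definition Zbar :: "'a set \<Rightarrow> ('a \<Rightarrow> 'a \<Rightarrow> bool) \<Rightarrow> nat" where
  "Zbar V E = Max {card S | S. minimal_zero_forcing_set V E S}"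

definition tar_verts :: "'a set \<Rightarrow> ('a \<Rightarrow> 'a \<Rightarrow> bool) \<Rightarrow> 'a set set" where
  "tar_verts V E = {S. zero_forcing_set V E S}"

definition tar_adj :: "'a set \<Rightarrow> 'a set \<Rightarrow> bool" where
  "tar_adj S T \<longleftrightarrow> card ((S - T) \<union> (T - S)) = 1"

definition tar_k_verts :: "'a set \<Rightarrow> ('a \<Rightarrow> 'a \<Rightarrow> bool) \<Rightarrow> nat \<Rightarrow> 'a set set" where
  "tar_k_verts V E k = {S. zero_forcing_set V E S \<and> card S \<le> k}"

text \<open>Connectedness of the graph induced on W by adjacency R; the empty graph
is not connected (standard convention).\<close>
definition graph_connected :: "'b set \<Rightarrow> ('b \<Rightarrow> 'b \<Rightarrow> bool) \<Rightarrow> bool" where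
  "graph_connected W R \<longleftrightarrow> W \<noteq> {} \<and>
     (\<forall>x\<in>W. \<forall>y\<in>W. (x, y) \<in> {(a, b). a \<in> W \<and> b \<in> W \<and> R a b}\<^sup>*)"

definition z0_lower :: "'a set \<Rightarrow> ('a \<Rightarrow> 'a \<Rightarrow> bool) \<Rightarrow> nat" where
  "z0_lower V E = (LEAST k. graph_connected (tar_k_verts V E k) tar_adj)"

definition z0 :: "'a set \<Rightarrow> ('a \<Rightarrow> 'a \<Rightarrow> bool) \<Rightarrow> nat" where
  "z0 V E = (LEAST k. \<forall>i. k \<le> i \<and> i \<le> card V \<longrightarrow>
                         graph_connected (tar_k_verts V E i) tar_adj)"

definition graph_iso :: "'b set \<Rightarrow> ('b \<Rightarrow> 'b \<Rightarrow> bool) \<Rightarrow> 'c set \<Rightarrow> ('c \<Rightarrow> 'c \<Rightarrow> bool) \<Rightarrow> bool" where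
  "graph_iso V1 E1 V2 E2 \<longleftrightarrow>
     (\<exists>f. bij_betw f V1 V2 \<and> (\<forall>x\<in>V1. \<forall>y\<in>V1. E1 x y \<longleftrightarrow> E2 (f x) (f y)))"

definition complete_verts :: "nat \<Rightarrow> nat set" where
  "complete_verts n = {0..<n}"
definition complete_adj :: "nat \<Rightarrow> nat \<Rightarrow> bool" where
  "complete_adj x y \<longleftrightarrow> x \<noteq> y"

definition star_verts :: "nat \<Rightarrow> nat set" where
  "star_verts n = {0..n}"
definition star_adj :: "nat \<Rightarrow> nat \<Rightarrow> bool" where
  "star_adj x y \<longleftrightarrow> (x = 0 \<and> y \<noteq> 0) \<or> (y = 0 \<and> x \<noteq> 0)"

end

theory Submission
  imports Defs
begin

text \<open>In \<open>K\<^sub>n\<close> every blue vertex is adjacent to every white vertex, so a force can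
happen only when exactly one vertex is white. Hence the zero forcing sets are \<open>V\<close> and the
\<open>n\<close> sets \<open>V - {i}\<close>, all of the latter minimal. Two sets \<open>V - {i}\<close>, \<open>V - {j}\<close> differ in
two vertices while \<open>V\<close> differs from each in one, so the reconfiguration graph is a star
centred at \<open>V\<close>; as soon as the size bound excludes the centre \<open>V\<close>, what remains consists
of at least two isolated vertices or is empty.\<close>

lemma zf_closure_subset:
  assumes "S \<subseteq> V"
  shows "zf_closure V E S \<subseteq> V"
proof
  fix x assume "x \<in> zf_closure V E S"
  then show "x \<in> V"
    by (induction rule: zf_closure.induct) (use assms in auto)
qed

lemma zf_closure_complete_eq:
  assumes "a \<in> V - S" "b \<in> V - S" "a \<noteq> b"
  shows "zf_closure V complete_adj S = S"
proof
  show "zf_closure V complete_adj S \<subseteq> S"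
  proof
    fix x assume "x \<in> zf_closure V complete_adj S"
    then show "x \<in> S"
    proof (induction rule: zf_closure.induct)
      case (force v w)
      \<comment> \<open>one of the white vertices \<open>a\<close>, \<open>b\<close> is a neighbour of \<open>v\<close> other than \<open>w\<close>\<close>
      obtain u where "u \<in> V - S" "u \<noteq> w" using assms by blast
      then show ?case using force by (auto simp: complete_adj_def)
    qed
  qed
qed (auto intro: zf_closure.base)

lemma zero_forcing_set_complete_delete:
  assumes "i \<in> V" "v \<in> V" "v \<noteq> i"
  shows "zero_forcing_set V complete_adj (V - {i})"
proof -
  have blue: "V - {i} \<subseteq> zf_closure V complete_adj (V - {i})"
    by (auto intro: zf_closure.base)
  have "i \<in> zf_closure V complete_adj (V - {i})"
  proof (rule zf_closure.force)
    show "v \<in> zf_closure V complete_adj (V - {i})"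
      using assms blue by blast
    show "\<forall>u\<in>V. complete_adj v u \<and> u \<noteq> i \<longrightarrow> u \<in> zf_closure V complete_adj (V - {i})"
      using blue by blast
  qed (use assms in \<open>simp_all add: complete_adj_def\<close>)
  with blue have "zf_closure V complete_adj (V - {i}) = V"
    using zf_closure_subset[of "V - {i}" V complete_adj] by blast
  then show ?thesis
    unfolding zero_forcing_set_def by blast
qed

lemma obtain_other_element:
  assumes "finite V" "2 \<le> card V" "i \<in> V"
  obtains j where "j \<in> V" "j \<noteq> i"
proof -
  have "card (V - {i}) > 0"
    using assms by simp
  then obtain j where "j \<in> V - {i}"
    by (metis card_gt_0_iff ex_in_conv)
  then show ?thesis
    using that by blast
qed

lemma zero_forcing_set_complete_iff:
  assumes "finite V" "2 \<le> card V"
  shows "zero_forcing_set V complete_adj S \<longleftrightarrow> S = V \<or> (\<exists>i\<in>V. S = V - {i})"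
proof
  assume zfs: "zero_forcing_set V complete_adj S"
  show "S = V \<or> (\<exists>i\<in>V. S = V - {i})"
  proof (rule ccontr)
    assume "\<not> ?thesis"
    with zfs obtain a b where "a \<in> V - S" "b \<in> V - S" "a \<noteq> b"
      unfolding zero_forcing_set_def by blast
    then have "zf_closure V complete_adj S \<noteq> V"
      using zf_closure_complete_eq by fastforce
    with zfs show False
      unfolding zero_forcing_set_def by blast
  qed
next
  assume "S = V \<or> (\<exists>i\<in>V. S = V - {i})"
  then show "zero_forcing_set V complete_adj S"
  proof
    assume "S = V"
    moreover have "V \<subseteq> zf_closure V complete_adj V"
      by (auto intro: zf_closure.base)
    ultimately show ?thesis
      using zf_closure_subset[of V V complete_adj]
      unfolding zero_forcing_set_def by blast
  next
    assume "\<exists>i\<in>V. S = V - {i}"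
    then obtain i where i: "i \<in> V" "S = V - {i}" by blast
    obtain v where "v \<in> V" "v \<noteq> i"
      using assms i(1) by (rule obtain_other_element)
    with i show ?thesis
      using zero_forcing_set_complete_delete by simp
  qed
qed

lemma tar_verts_complete:
  assumes "finite V" "2 \<le> card V"
  shows "tar_verts V complete_adj = insert V ((\<lambda>i. V - {i}) ` V)"
  unfolding tar_verts_def zero_forcing_set_complete_iff[OF assms] by blast

lemma tar_adj_irrefl: "\<not> tar_adj S S"
  by (simp add: tar_adj_def)

lemma tar_adj_commute: "tar_adj S T \<longleftrightarrow> tar_adj T S"
  by (simp add: tar_adj_def Un_commute)

lemma tar_adj_delete:
  assumes "i \<in> V"
  shows "tar_adj V (V - {i})"
proof -
  have "sym_diff V (V - {i}) = {i}"
    using assms by blast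
  then show ?thesis
    by (simp add: tar_adj_def)
qed

lemma not_tar_adj_delete_delete:
  assumes "i \<in> V" "j \<in> V"
  shows "\<not> tar_adj (V - {i}) (V - {j})"
proof (cases "i = j")
  case False
  with assms have "sym_diff (V - {i}) (V - {j}) = {i, j}"
    by blast
  with False show ?thesis
    by (simp add: tar_adj_def)
qed (simp add: tar_adj_irrefl)

lemma graph_iso_sym:
  assumes "graph_iso V1 E1 V2 E2"
  shows "graph_iso V2 E2 V1 E1"
proof -
  obtain f where f: "bij_betw f V1 V2" and adj: "\<forall>x\<in>V1. \<forall>y\<in>V1. E1 x y \<longleftrightarrow> E2 (f x) (f y)"
    using assms unfolding graph_iso_def by blast
  have "E2 x y \<longleftrightarrow> E1 (inv_into V1 f x) (inv_into V1 f y)" if "x \<in> V2" "y \<in> V2" for x y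
  proof -
    have "inv_into V1 f x \<in> V1" "inv_into V1 f y \<in> V1"
      using that bij_betw_apply[OF bij_betw_inv_into[OF f]] by auto
    moreover have "f (inv_into V1 f x) = x" "f (inv_into V1 f y) = y"
      using that f bij_betw_inv_into_right by fast+
    ultimately show ?thesis
      using adj by metis
  qed
  then show ?thesis
    unfolding graph_iso_def using bij_betw_inv_into[OF f] by blast
qed

lemma star_graph_iso:
  assumes "bij_betw h {1..n} L" "c \<notin> L" "\<not> R c c"
    and "\<forall>x\<in>L. R c x \<and> R x c" "\<forall>x\<in>L. \<forall>y\<in>L. \<not> R x y"
  shows "graph_iso (star_verts n) star_adj (insert c L) R"
proof -
  define f where "f k = (if k = 0 then c else h k)" for k
  have "bij_betw f {1..n} L"
    using assms(1) by (rule bij_betw_cong[THEN iffD1, rotated]) (simp add: f_def)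
  then have bij: "bij_betw f ({1..n} \<union> {0}) (L \<union> {c})"
    using assms(2) notIn_Un_bij_betw3[of 0 "{1..n}" f L] by (simp add: f_def)
  have in_L: "f k \<in> L" if "k \<in> {1..n}" for k
    using bij_betw_apply[OF \<open>bij_betw f {1..n} L\<close> that] .
  moreover have "star_adj x y \<longleftrightarrow> R (f x) (f y)" if xy: "x \<in> {0..n}" "y \<in> {0..n}" for x y
  proof -
    consider "x = 0" "y = 0" | "x = 0" "y \<in> {1..n}" | "x \<in> {1..n}" "y = 0"
      | "x \<in> {1..n}" "y \<in> {1..n}"
      using xy by fastforce
    then show ?thesis
      by cases (use assms(3-5) in_L in \<open>auto simp: star_adj_def f_def\<close>)
  qed
  moreover have "{1..n} \<union> {0} = {0..n}" "L \<union> {c} = insert c L"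
    by auto
  ultimately show ?thesis
    unfolding graph_iso_def star_verts_def using bij by (intro exI[of _ f]) simp
qed

lemma tar_complete_iso_star:
  assumes "2 \<le> n"
  shows "graph_iso (tar_verts {0..<n} complete_adj) tar_adj (star_verts n) star_adj"
proof -
  define V where "V = {0..<n::nat}"
  have "bij_betw (\<lambda>k. k - 1) {1..n} V"
    unfolding V_def by (rule bij_betw_byWitness[where f' = Suc]) auto
  moreover have "bij_betw (\<lambda>i. V - {i}) V ((\<lambda>i. V - {i}) ` V)"
    by (rule inj_on_imp_bij_betw) (auto simp: inj_on_def)
  ultimately have "bij_betw ((\<lambda>i. V - {i}) \<circ> (\<lambda>k. k - 1)) {1..n} ((\<lambda>i. V - {i}) ` V)"
    by (rule bij_betw_trans)
  then have "graph_iso (star_verts n) star_adj (insert V ((\<lambda>i. V - {i}) ` V)) tar_adj"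
    by (rule star_graph_iso)
      (auto simp: tar_adj_irrefl tar_adj_delete tar_adj_commute[of _ V] not_tar_adj_delete_delete)
  moreover have "tar_verts V complete_adj = insert V ((\<lambda>i. V - {i}) ` V)"
    using assms by (intro tar_verts_complete) (auto simp: V_def)
  ultimately show ?thesis
    unfolding V_def by (auto intro: graph_iso_sym)
qed

lemma card_delete_image:
  assumes "finite V" "V \<noteq> {}"
  shows "(\<lambda>i. card (V - {i})) ` V = {card V - 1}"
  using assms by auto

lemma card_zero_forcing_sets_complete:
  assumes "finite V" "2 \<le> card V"
  shows "{card S | S. zero_forcing_set V complete_adj S} = {card V, card V - 1}"
proof -
  have "{card S | S. zero_forcing_set V complete_adj S} = card ` tar_verts V complete_adj"
    by (auto simp: tar_verts_def)
  also have "\<dots> = insert (card V) ((\<lambda>i. card (V - {i})) ` V)"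
    by (simp add: tar_verts_complete[OF assms] image_image)
  also have "(\<lambda>i. card (V - {i})) ` V = {card V - 1}"
    using assms by (intro card_delete_image) auto
  finally show ?thesis .
qed

lemma Z_complete:
  assumes "finite V" "2 \<le> card V"
  shows "Z V complete_adj = card V - 1"
  unfolding Z_def card_zero_forcing_sets_complete[OF assms] by simp

lemma minimal_zero_forcing_set_complete_iff:
  assumes "finite V" "2 \<le> card V"
  shows "minimal_zero_forcing_set V complete_adj S \<longleftrightarrow> (\<exists>i\<in>V. S = V - {i})"
proof -
  obtain a where "a \<in> V"
    using assms by fastforce
  then have "V - {a} \<subset> V \<and> zero_forcing_set V complete_adj (V - {a})"
    by (auto simp: zero_forcing_set_complete_iff[OF assms])
  moreover have "\<not> (T \<subset> V - {i} \<and> zero_forcing_set V complete_adj T)" if "i \<in> V" for i T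
    using that unfolding zero_forcing_set_complete_iff[OF assms] by blast
  ultimately show ?thesis
    unfolding minimal_zero_forcing_set_def zero_forcing_set_complete_iff[OF assms] by blast
qed

lemma Zbar_complete:
  assumes "finite V" "2 \<le> card V"
  shows "Zbar V complete_adj = card V - 1"
proof -
  have "{card S | S. minimal_zero_forcing_set V complete_adj S} = (\<lambda>i. card (V - {i})) ` V"
    unfolding minimal_zero_forcing_set_complete_iff[OF assms] by blast
  also have "\<dots> = {card V - 1}"
    using assms by (intro card_delete_image) auto
  finally show ?thesis
    unfolding Zbar_def by simp
qed

lemma graph_connected_star:
  assumes "c \<in> W" "\<forall>x\<in>W - {c}. R c x \<and> R x c"
  shows "graph_connected W R"
proof -
  let ?E = "{(a, b). a \<in> W \<and> b \<in> W \<and> R a b}"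
  have "(x, c) \<in> ?E\<^sup>* \<and> (c, x) \<in> ?E\<^sup>*" if "x \<in> W" for x
  proof (cases "x = c")
    case False
    with assms that have "(x, c) \<in> ?E" "(c, x) \<in> ?E"
      by auto
    then show ?thesis
      by blast
  qed simp
  then show ?thesis
    unfolding graph_connected_def using assms(1) by (blast intro: rtrancl_trans)
qed

lemma graph_connected_edgeless:
  assumes "graph_connected W R" "\<forall>a\<in>W. \<forall>b\<in>W. \<not> R a b"
  shows "\<exists>x. W = {x}"
proof -
  have no_edges: "{(a, b). a \<in> W \<and> b \<in> W \<and> R a b} = {}"
    using assms(2) by blast
  obtain x where x: "x \<in> W"
    using assms(1) unfolding graph_connected_def by blast
  have "y = x" if "y \<in> W" for y
    using assms(1) that x unfolding graph_connected_def no_edges by simp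
  with x show ?thesis
    by blast
qed

lemma tar_k_verts_complete_connected_iff:
  assumes "finite V" "2 \<le> card V"
  shows "graph_connected (tar_k_verts V complete_adj k) tar_adj \<longleftrightarrow> card V \<le> k"
proof
  assume "card V \<le> k"
  then have "tar_k_verts V complete_adj k = insert V ((\<lambda>i. V - {i}) ` V)"
    unfolding tar_k_verts_def zero_forcing_set_complete_iff[OF assms]
    using assms(1) by (auto intro: card_mono order_trans)
  then show "graph_connected (tar_k_verts V complete_adj k) tar_adj"
    by (auto intro!: graph_connected_star simp: tar_adj_delete tar_adj_commute[of _ V])
next
  assume connected: "graph_connected (tar_k_verts V complete_adj k) tar_adj"
  show "card V \<le> k"
  proof (rule ccontr)
    assume "\<not> card V \<le> k"
    then have sub: "tar_k_verts V complete_adj k \<subseteq> (\<lambda>i. V - {i}) ` V"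
      unfolding tar_k_verts_def zero_forcing_set_complete_iff[OF assms] by auto
    have "\<forall>S\<in>tar_k_verts V complete_adj k. \<forall>T\<in>tar_k_verts V complete_adj k. \<not> tar_adj S T"
      using sub not_tar_adj_delete_delete by (smt (verit) imageE subsetD)
    then obtain T where T: "tar_k_verts V complete_adj k = {T}"
      using graph_connected_edgeless[OF connected] by blast
    with sub obtain i where i: "i \<in> V" "T = V - {i}"
      by blast
    obtain j where j: "j \<in> V" "j \<noteq> i"
      using assms i(1) by (rule obtain_other_element)
    have "card (V - {i}) \<le> k"
      using T i unfolding tar_k_verts_def by blast
    with i j assms(1) have "V - {j} \<in> tar_k_verts V complete_adj k"
      unfolding tar_k_verts_def zero_forcing_set_complete_iff[OF assms] by auto
    with T i j show False
      by blast
  qed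
qed

lemma z0_lower_complete:
  assumes "finite V" "2 \<le> card V"
  shows "z0_lower V complete_adj = card V"
  unfolding z0_lower_def tar_k_verts_complete_connected_iff[OF assms]
  by (rule Least_equality) auto

lemma z0_complete:
  assumes "finite V" "2 \<le> card V"
  shows "z0 V complete_adj = card V"
  unfolding z0_def tar_k_verts_complete_connected_iff[OF assms]
proof (rule Least_equality)
  fix k
  assume "\<forall>i. k \<le> i \<and> i \<le> card V \<longrightarrow> card V \<le> i"
  then show "card V \<le> k"
    by (cases "k \<le> card V") auto
qed simp

theorem proposition1p4:
  fixes n :: nat
  assumes "n \<ge> 2"
  shows "graph_iso (tar_verts (complete_verts n) complete_adj) tar_adj (star_verts n) star_adj
       \<and> Zbar (complete_verts n) complete_adj = n - 1
       \<and> Z (complete_verts n) complete_adj = n - 1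
       \<and> z0 (complete_verts n) complete_adj = n
       \<and> z0_lower (complete_verts n) complete_adj = n"
proof -
  let ?V = "complete_verts n"
  have V: "finite ?V" "2 \<le> card ?V" and card_V: "card ?V = n"
    using assms by (simp_all add: complete_verts_def)
  show ?thesis
    using tar_complete_iso_star[OF assms] Zbar_complete[OF V] Z_complete[OF V]
      z0_complete[OF V] z0_lower_complete[OF V]
    unfolding card_V by (simp add: complete_verts_def)
qed

end
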